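(* Let $f,g\in\mathbb L^2([0,1])$ with $\Delta=\|f-g\|>0$, let $X$ be distributed according to the model below, and set $\delta=\dfrac{e^{-(1+\Delta/2)^2/2}}{2\sqrt{2\pi}}$. Then for all $\epsilon\le\frac14\wedge\Delta$, \[ \mathbb P\Big(\delta\epsilon\le\big|\eta(X)-\tfrac12\big|\le\epsilon\Big)\ge\delta\frac\epsilon\Delta. \]
   Context: Model: $Y\sim\mathrm{Bernoulli}(1/2)$ independent of a standard Brownian motion $W$ on $[0,1]$, and $dX(t)=Yf(t)\,dt+(1-Y)g(t)\,dt+dW(t)$. Regression function $\eta(X)=\mathbb P(Y=1\mid X)=\dfrac{\exp(\int_0^1(f-g)\,dX-\frac12\|f\|^2+\frac12\|g\|^2)}{1+\exp(\int_0^1(f-g)\,dX-\frac12\|f\|^2+\frac12\|g\|^2)}$. $\|\cdot\|$ is the $\mathbb L^2([0,1])$ norm; $a\wedge b=\min\{a,b\}$. *)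

theory Defs
  imports "HOL-Probability.Probability"
begin

definition L2_01 :: "(real \<Rightarrow> real) \<Rightarrow> bool" where
  "L2_01 h \<longleftrightarrow> h \<in> borel_measurable lborel \<and>
     set_integrable lborel {0..1} (\<lambda>t. (h t)\<^sup>2)"

definition L2_norm_01 :: "(real \<Rightarrow> real) \<Rightarrow> real" where
  "L2_norm_01 h = sqrt (LBINT t:{0..1}. (h t)\<^sup>2)"

definition brownian_motion_01 :: "'a measure \<Rightarrow> (real \<Rightarrow> 'a \<Rightarrow> real) \<Rightarrow> bool" where
  "brownian_motion_01 M W \<longleftrightarrow>
     prob_space M \<and>
     (\<forall>t\<in>{0..1}. W t \<in> borel_measurable M) \<and>
     (AE \<omega> in M. W 0 \<omega> = 0) \<and>
     (AE \<omega> in M. continuous_on {0..1} (\<lambda>t. W t \<omega>)) \<and>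
     (\<forall>s t. 0 \<le> s \<longrightarrow> s < t \<longrightarrow> t \<le> 1 \<longrightarrow>
        distributed M lborel (\<lambda>\<omega>. W t \<omega> - W s \<omega>)
          (\<lambda>x. ennreal (normal_density 0 (sqrt (t - s)) x))) \<and>
     (\<forall>(ts :: nat \<Rightarrow> real) n. ts 0 \<ge> 0 \<longrightarrow> ts n \<le> 1 \<longrightarrow>
        (\<forall>i<n. ts i < ts (Suc i)) \<longrightarrow>
        prob_space.indep_vars M (\<lambda>_. borel)
          (\<lambda>i \<omega>. W (ts (Suc i)) \<omega> - W (ts i) \<omega>) {..<n})"

text \<open>Dyadic Riemann--Stieltjes approximation of \<open>\<integral>\<^sub>0\<^sup>1 h dX\<close>: h is replaced by
  its averages on the dyadic intervals of level n.\<close>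
definition dyadic_stoch_sum ::
    "(real \<Rightarrow> 'a \<Rightarrow> real) \<Rightarrow> (real \<Rightarrow> real) \<Rightarrow> nat \<Rightarrow> 'a \<Rightarrow> real" where
  "dyadic_stoch_sum X h n \<omega> =
     (\<Sum>k<2^n. (2^n * (LBINT s:{real k / 2^n .. real (Suc k) / 2^n}. h s)) *
        (X (real (Suc k) / 2^n) \<omega> - X (real k / 2^n) \<omega>))"

text \<open>I is (a version of) the stochastic (Wiener) integral \<open>\<integral>\<^sub>0\<^sup>1 h dX\<close>:
  the limit in probability of the dyadic sums.\<close>
definition is_stoch_integral ::
    "'a measure \<Rightarrow> (real \<Rightarrow> 'a \<Rightarrow> real) \<Rightarrow> (real \<Rightarrow> real) \<Rightarrow> ('a \<Rightarrow> real) \<Rightarrow> bool" where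
  "is_stoch_integral M X h I \<longleftrightarrow>
     I \<in> borel_measurable M \<and>
     (\<forall>e>0. (\<lambda>n. measure M {\<omega>\<in>space M. \<bar>dyadic_stoch_sum X h n \<omega> - I \<omega>\<bar> > e})
               \<longlonglongrightarrow> 0)"

definition model_X ::
    "(real \<Rightarrow> real) \<Rightarrow> (real \<Rightarrow> real) \<Rightarrow> ('a \<Rightarrow> real) \<Rightarrow> (real \<Rightarrow> 'a \<Rightarrow> real)
      \<Rightarrow> real \<Rightarrow> 'a \<Rightarrow> real" where
  "model_X f g Y W t \<omega> =
     Y \<omega> * (LBINT s:{0..t}. f s) + (1 - Y \<omega>) * (LBINT s:{0..t}. g s) + W t \<omega>"

text \<open>Regression function, given the value I of \<open>\<integral>(f-g) dX\<close>.\<close>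
definition eta_reg :: "(real \<Rightarrow> real) \<Rightarrow> (real \<Rightarrow> real) \<Rightarrow> real \<Rightarrow> real" where
  "eta_reg f g I =
     (let z = I - (L2_norm_01 f)\<^sup>2 / 2 + (L2_norm_01 g)\<^sup>2 / 2 in exp z / (1 + exp z))"

end

theory Submission
  imports Defs
begin

text \<open>
  The stochastic integral \<open>I = \<integral>(f - g) dX\<close> is only known as the limit in probability of its
  dyadic Riemann--Stieltjes sums \<open>S\<^sub>n\<close>. With \<open>h = f - g\<close>, every \<open>S\<^sub>n\<close> splits as
  \<open>Y \<langle>h, f\<rangle>\<^sub>n + (1 - Y) \<langle>h, g\<rangle>\<^sub>n + Z\<^sub>n\<close>, where \<open>\<langle>u, v\<rangle>\<^sub>n\<close> is the inner product of the
  averages of \<open>u\<close> and \<open>v\<close> over the dyadic intervals of level \<open>n\<close>, and the Brownian part \<open>Z\<^sub>n\<close> is a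
  centred Gaussian with variance \<open>\<langle>h, h\<rangle>\<^sub>n\<close>, independent of \<open>Y\<close>. Since dyadic averages
  converge in \<open>L\<^sup>2\<close>, these inner products tend to \<open>c + \<Delta>\<^sup>2/2\<close>, \<open>c - \<Delta>\<^sup>2/2\<close> and \<open>\<Delta>\<^sup>2\<close>, where
  \<open>c = (\<parallel>f\<parallel>\<^sup>2 - \<parallel>g\<parallel>\<^sup>2)/2\<close>. So for large \<open>n\<close> and either value of \<open>Y\<close>, \<open>S\<^sub>n - c\<close> is Gaussian with
  mean \<open>\<plusminus>\<Delta>\<^sup>2/2\<close> and standard deviation \<open>\<sigma> \<le> \<Delta>\<close>; its density is at least \<open>2\<delta>/\<sigma>\<close> up to
  distance \<open>\<sigma>(1 + \<Delta>/2)\<close> from the origin, which bounds from below the probability that \<open>|S\<^sub>n - c|\<close>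
  lies in a window of size comparable to \<open>\<epsilon>\<close>. Finally \<open>\<eta>(X)\<close> is the logistic function of \<open>I - c\<close>,
  which near \<open>0\<close> deviates from \<open>1/2\<close> by between \<open>6/25\<close> and \<open>1/2\<close> times its argument; so the
  window for \<open>S\<^sub>n\<close> yields the band for \<open>\<eta>(X)\<close> except on the rare event that \<open>S\<^sub>n\<close> is far from \<open>I\<close>.
\<close>

section \<open>Square-integrable functions on the unit interval\<close>

lemma set_integrable_const_Icc [simp, intro]:
  fixes a b c :: real
  shows "set_integrable lborel {a..b} (\<lambda>_. c)"
  by (simp add: set_integrable_def emeasure_lborel_Icc_eq integrable_real_mult_indicator)

lemma set_integral_const_Icc:
  fixes a b c :: real
  assumes "a \<le> b"
  shows "(LBINT x:{a..b}. c) = c * (b - a)"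
  using assms by (simp add: set_lebesgue_integral_def mult.commute)

lemma set_integral_Icc_split:
  fixes a b c :: real and u :: "real \<Rightarrow> real"
  assumes "a \<le> b" "b \<le> c" "set_integrable lborel {a..c} u"
  shows "(LBINT x:{a..c}. u x) = (LBINT x:{a..b}. u x) + (LBINT x:{b..c}. u x)"
proof -
  have "(LBINT x:{a..b} \<union> {b..c}. u x) = (LBINT x:{a..b}. u x) + (LBINT x:{b..c}. u x)"
  proof (rule set_integral_Un_AE)
    show "AE x in lborel. \<not> (x \<in> {a..b} \<and> x \<in> {b..c})"
      using AE_lborel_singleton[of b] by eventually_elim auto
    show "set_integrable lborel {a..b} u" "set_integrable lborel {b..c} u"
      using assms by (auto intro: set_integrable_subset)
  qed auto
  moreover have "{a..b} \<union> {b..c} = {a..c}"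
    using assms by auto
  ultimately show ?thesis
    by simp
qed

lemma set_integral_nonneg:
  fixes u :: "'a \<Rightarrow> real"
  shows "(\<And>x. x \<in> A \<Longrightarrow> 0 \<le> u x) \<Longrightarrow> 0 \<le> (LINT x:A|M. u x)"
  unfolding set_lebesgue_integral_def by (auto intro!: integral_nonneg simp: indicator_def)

lemma L2_01_measurable [measurable_dest]: "L2_01 u \<Longrightarrow> u \<in> borel_measurable borel"
  unfolding L2_01_def by simp

lemma L2_01_square_integrable: "L2_01 u \<Longrightarrow> set_integrable lborel {0..1} (\<lambda>t. (u t)\<^sup>2)"
  unfolding L2_01_def by simp

lemma L2_01_dominated:
  assumes "L2_01 w" "u \<in> borel_measurable borel" "\<And>t. \<bar>u t\<bar> \<le> \<bar>w t\<bar>"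
  shows "L2_01 u"
  unfolding L2_01_def
proof
  show "set_integrable lborel {0..1} (\<lambda>t. (u t)\<^sup>2)"
  proof (rule set_integrable_bound[OF L2_01_square_integrable[OF assms(1)]])
    show "set_borel_measurable lborel {0..1} (\<lambda>t. (u t)\<^sup>2)"
      using assms(2) unfolding set_borel_measurable_def by measurable
    show "AE t in lborel. t \<in> {0..1} \<longrightarrow> norm ((u t)\<^sup>2) \<le> norm ((w t)\<^sup>2)"
      using assms(3) by (auto simp: abs_le_square_iff)
  qed
qed (use assms(2) in simp)

lemma L2_01_const [simp, intro]: "L2_01 (\<lambda>_. c)"
  unfolding L2_01_def by simp

lemma L2_01_indicator: "A \<in> sets borel \<Longrightarrow> L2_01 (indicator A)"
  by (rule L2_01_dominated[of "\<lambda>_. 1"]) (auto simp: indicator_def)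

lemma L2_01_mult_integrable:
  assumes "L2_01 u" "L2_01 v"
  shows "set_integrable lborel {0..1} (\<lambda>t. u t * v t)"
proof (rule set_integrable_bound[where f="\<lambda>t. (u t)\<^sup>2 + (v t)\<^sup>2"])
  show "set_integrable lborel {0..1} (\<lambda>t. (u t)\<^sup>2 + (v t)\<^sup>2)"
    using assms by (intro set_integral_add L2_01_square_integrable)
  show "set_borel_measurable lborel {0..1} (\<lambda>t. u t * v t)"
    using assms unfolding set_borel_measurable_def by measurable
  have "\<bar>u t * v t\<bar> \<le> (u t)\<^sup>2 + (v t)\<^sup>2" for t
  proof -
    have "2 * (\<bar>u t\<bar> * \<bar>v t\<bar>) \<le> (u t)\<^sup>2 + (v t)\<^sup>2"
      using sum_squares_bound[of "\<bar>u t\<bar>" "\<bar>v t\<bar>"] by (simp add: mult.assoc)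
    moreover have "0 \<le> \<bar>u t\<bar> * \<bar>v t\<bar>"
      by simp
    ultimately show ?thesis
      unfolding abs_mult by linarith
  qed
  then show "AE t in lborel. t \<in> {0..1} \<longrightarrow> norm (u t * v t) \<le> norm ((u t)\<^sup>2 + (v t)\<^sup>2)"
    by simp
qed

lemma L2_01_integrable:
  assumes "L2_01 u"
  shows "set_integrable lborel {0..1} u"
  using L2_01_mult_integrable[OF assms L2_01_const[of 1]] by simp

lemma L2_01_add:
  assumes "L2_01 u" "L2_01 v"
  shows "L2_01 (\<lambda>t. u t + v t)"
proof -
  have "set_integrable lborel {0..1} (\<lambda>t. (u t)\<^sup>2 + (v t)\<^sup>2 + 2 * (u t * v t))"
    using assms by (intro set_integral_add set_integrable_mult_right
        L2_01_mult_integrable L2_01_square_integrable)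
  moreover have "(\<lambda>t. u t + v t) \<in> borel_measurable borel"
    using assms by measurable
  ultimately show ?thesis
    unfolding L2_01_def power2_sum by (simp add: mult.assoc)
qed

lemma L2_01_cmult: "L2_01 u \<Longrightarrow> L2_01 (\<lambda>t. c * u t)"
  unfolding L2_01_def power_mult_distrib by auto

lemma L2_01_diff: "L2_01 u \<Longrightarrow> L2_01 v \<Longrightarrow> L2_01 (\<lambda>t. u t - v t)"
  using L2_01_add[OF _ L2_01_cmult, of u v "-1"] by simp

lemma L2_01_integrable_on:
  assumes "L2_01 u" "A \<in> sets borel" "A \<subseteq> {0..1}"
  shows "set_integrable lborel A u" "set_integrable lborel A (\<lambda>t. (u t)\<^sup>2)"
  using set_integrable_subset[OF L2_01_integrable[OF assms(1)]]
    set_integrable_subset[OF L2_01_square_integrable[OF assms(1)]] assms(2,3)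
  by auto

lemma L2_norm_01_sq: "(L2_norm_01 u)\<^sup>2 = (LBINT t:{0..1}. u t * u t)"
  unfolding L2_norm_01_def by (simp add: set_integral_nonneg power2_eq_square)

lemma set_integral_diff_mult:
  assumes "L2_01 u" "L2_01 v" "L2_01 w"
  shows "(LBINT s:{0..1}. (u s - v s) * w s) = (LBINT s:{0..1}. u s * w s) - (LBINT s:{0..1}. v s * w s)"
    "(LBINT s:{0..1}. w s * (u s - v s)) = (LBINT s:{0..1}. w s * u s) - (LBINT s:{0..1}. w s * v s)"
  using set_integral_diff(2)[OF L2_01_mult_integrable[OF assms(1,3)] L2_01_mult_integrable[OF assms(2,3)]]
    set_integral_diff(2)[OF L2_01_mult_integrable[OF assms(3,1)] L2_01_mult_integrable[OF assms(3,2)]]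
  by (simp_all add: algebra_simps)

lemma L2_01_tendsto_dominated:
  fixes u w :: "real \<Rightarrow> real" and U :: "nat \<Rightarrow> real \<Rightarrow> real"
  assumes [measurable]: "u \<in> borel_measurable borel" "\<And>m. U m \<in> borel_measurable borel"
    and lim: "\<And>t. (\<lambda>m. U m t) \<longlonglongrightarrow> u t"
    and bound: "\<And>m t. (u t - U m t)\<^sup>2 \<le> w t" and w: "set_integrable lborel {0..1} w"
  shows "(\<lambda>m. LBINT t:{0..1}. (u t - U m t)\<^sup>2) \<longlonglongrightarrow> 0"
proof -
  have "(\<lambda>m. integral\<^sup>L lborel (\<lambda>t. indicator {0..1} t *\<^sub>R (u t - U m t)\<^sup>2))
      \<longlonglongrightarrow> integral\<^sup>L lborel (\<lambda>_::real. 0::real)"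
  proof (rule Bochner_Integration.integral_dominated_convergence)
    show "integrable lborel (\<lambda>t. indicator {0..1} t *\<^sub>R w t)"
      using w unfolding set_integrable_def .
    show "AE t in lborel. norm (indicator {0..1} t *\<^sub>R (u t - U m t)\<^sup>2) \<le> indicator {0..1} t *\<^sub>R w t" for m
      using bound by (auto simp: indicator_def)
    show "AE t in lborel. (\<lambda>m. indicator {0..1} t *\<^sub>R (u t - U m t)\<^sup>2) \<longlonglongrightarrow> 0"
    proof (intro AE_I2)
      fix t
      have "(\<lambda>m. indicator {0..1} t *\<^sub>R (u t - U m t)\<^sup>2) \<longlonglongrightarrow> indicator {0..1} t *\<^sub>R (u t - u t)\<^sup>2"
        using lim by (intro tendsto_intros)
      then show "(\<lambda>m. indicator {0..1} t *\<^sub>R (u t - U m t)\<^sup>2) \<longlonglongrightarrow> 0"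
        by simp
    qed
  qed auto
  then show ?thesis
    by (simp add: set_lebesgue_integral_def)
qed

section \<open>Dyadic averages\<close>

definition dyadic_interval :: "nat \<Rightarrow> nat \<Rightarrow> real set" where
  "dyadic_interval n k = {real k / 2^n .. real (Suc k) / 2^n}"

definition dyadic_integral :: "nat \<Rightarrow> (real \<Rightarrow> real) \<Rightarrow> nat \<Rightarrow> real" where
  "dyadic_integral n u k = (LBINT s:dyadic_interval n k. u s)"

text \<open>\<open>dyadic_inner n u v\<close> is the inner product in \<open>L\<^sup>2[0,1]\<close> of the averages of \<open>u\<close> and \<open>v\<close>
  over the dyadic intervals of level \<open>n\<close>, and \<open>dyadic_defect n u\<close> is the squared \<open>L\<^sup>2\<close> distance
  of \<open>u\<close> from its averages.\<close>

definition dyadic_inner :: "nat \<Rightarrow> (real \<Rightarrow> real) \<Rightarrow> (real \<Rightarrow> real) \<Rightarrow> real" where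
  "dyadic_inner n u v = 2^n * (\<Sum>k<2^n. dyadic_integral n u k * dyadic_integral n v k)"

definition dyadic_defect :: "nat \<Rightarrow> (real \<Rightarrow> real) \<Rightarrow> real" where
  "dyadic_defect n u =
     (\<Sum>k<2^n. LBINT s:dyadic_interval n k. (u s - 2^n * dyadic_integral n u k)\<^sup>2)"

lemma dyadic_points:
  assumes "k < 2^n"
  shows "real k / 2^n \<in> {0..1}" "real (Suc k) / 2^n \<in> {0..1}" "real k / 2^n < real (Suc k) / 2^n"
proof -
  have "real (Suc k) \<le> 2^n"
    using assms by (metis Suc_leI of_nat_le_iff of_nat_numeral of_nat_power)
  moreover have "real k \<le> 2^n"
    using assms by (metis less_imp_le of_nat_le_iff of_nat_numeral of_nat_power)
  ultimately show "real k / 2^n \<in> {0..1}" "real (Suc k) / 2^n \<in> {0..1}"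
    by (simp_all add: field_simps)
qed (simp add: divide_strict_right_mono)

lemma dyadic_interval_subset: "k < 2^n \<Longrightarrow> dyadic_interval n k \<subseteq> {0..1}"
  using dyadic_points[of k n] unfolding dyadic_interval_def by auto

lemma dyadic_interval_sets [measurable]: "dyadic_interval n k \<in> sets borel"
  unfolding dyadic_interval_def by simp

lemma set_integrable_dyadic_interval_const [simp]:
  "set_integrable lborel (dyadic_interval n k) (\<lambda>_. c :: real)"
  unfolding dyadic_interval_def by simp

lemma set_integral_dyadic_interval_const:
  fixes c :: real
  shows "(LBINT s:dyadic_interval n k. c) = c / 2^n"
  unfolding dyadic_interval_def
  by (subst set_integral_const_Icc) (auto simp: divide_right_mono diff_divide_distrib[symmetric])

lemma set_integral_dyadic_step:
  assumes "set_integrable lborel {0..1} u" "k < 2^n"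
  shows "(LBINT s:{0..real (Suc k) / 2^n}. u s) =
         (LBINT s:{0..real k / 2^n}. u s) + dyadic_integral n u k"
  unfolding dyadic_integral_def dyadic_interval_def
  using dyadic_points[OF assms(2)]
  by (intro set_integral_Icc_split set_integrable_subset[OF assms(1)]) auto

lemma set_integral_dyadic_partition:
  assumes "set_integrable lborel {0..1} u"
  shows "(LBINT s:{0..1}. u s) = (\<Sum>k<2^n. dyadic_integral n u k)"
proof -
  have "(LBINT s:{0..real j / 2^n}. u s) = (\<Sum>k<j. dyadic_integral n u k)" if "j \<le> 2^n" for j
    using that
  proof (induction j)
    case 0
    have "(LBINT s:{0}. u s) = 0"
      unfolding set_lebesgue_integral_def
      by (rule integral_eq_zero_AE) (use AE_lborel_singleton[of 0] in \<open>auto elim!: eventually_mono\<close>)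
    then show ?case
      by simp
  next
    case (Suc j)
    then show ?case
      using set_integral_dyadic_step[OF assms, of j n] by simp
  qed
  from this[of "2^n"] show ?thesis
    by simp
qed

lemma dyadic_integral_add:
  assumes "L2_01 u" "L2_01 v" "k < 2^n"
  shows "dyadic_integral n (\<lambda>s. u s + v s) k = dyadic_integral n u k + dyadic_integral n v k"
  unfolding dyadic_integral_def
  using assms by (intro set_integral_add L2_01_integrable_on dyadic_interval_subset) auto

lemma dyadic_integral_cmult: "dyadic_integral n (\<lambda>s. c * u s) k = c * dyadic_integral n u k"
  unfolding dyadic_integral_def by simp

lemma dyadic_integral_diff:
  assumes "L2_01 u" "L2_01 v" "k < 2^n"
  shows "dyadic_integral n (\<lambda>s. u s - v s) k = dyadic_integral n u k - dyadic_integral n v k"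
  unfolding dyadic_integral_def
  using assms by (intro set_integral_diff L2_01_integrable_on dyadic_interval_subset) auto

lemma set_integral_dyadic_variance:
  assumes "L2_01 u" "k < 2^n"
  defines "a \<equiv> dyadic_integral n u k"
  shows "(LBINT s:dyadic_interval n k. (u s - 2^n * a)\<^sup>2) =
         (LBINT s:dyadic_interval n k. (u s)\<^sup>2) - 2^n * a\<^sup>2"
proof -
  note int = L2_01_integrable_on[OF assms(1) dyadic_interval_sets dyadic_interval_subset[OF assms(2)]]
  have "(LBINT s:dyadic_interval n k. (u s - 2^n * a)\<^sup>2) =
        (LBINT s:dyadic_interval n k. ((u s)\<^sup>2 - (2 * 2^n * a) * u s) + (2^n * a)\<^sup>2)"
    by (simp add: power2_diff algebra_simps)
  also have "\<dots> = (LBINT s:dyadic_interval n k. (u s)\<^sup>2) - (2 * 2^n * a) * a + (2^n * a)\<^sup>2 / 2^n"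
    using int by (simp add: set_integral_dyadic_interval_const a_def dyadic_integral_def)
  finally show ?thesis
    by (simp add: power2_eq_square)
qed

lemma dyadic_defect_eq:
  assumes "L2_01 u"
  shows "dyadic_defect n u = (LBINT s:{0..1}. (u s)\<^sup>2) - dyadic_inner n u u"
proof -
  have "dyadic_defect n u =
        (\<Sum>k<2^n. (LBINT s:dyadic_interval n k. (u s)\<^sup>2) - 2^n * (dyadic_integral n u k)\<^sup>2)"
    unfolding dyadic_defect_def using assms by (intro sum.cong set_integral_dyadic_variance) auto
  then show ?thesis
    using set_integral_dyadic_partition[OF L2_01_square_integrable[OF assms], of n]
    unfolding dyadic_inner_def dyadic_integral_def[of n "\<lambda>s. (u s)\<^sup>2"]
    by (simp add: sum_subtractf sum_distrib_left power2_eq_square)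
qed

lemma dyadic_defect_nonneg: "0 \<le> dyadic_defect n u"
  unfolding dyadic_defect_def by (intro sum_nonneg set_integral_nonneg) simp

lemma dyadic_defect_le: "L2_01 u \<Longrightarrow> dyadic_defect n u \<le> (LBINT s:{0..1}. (u s)\<^sup>2)"
  by (simp add: dyadic_defect_eq dyadic_inner_def sum_nonneg power2_eq_square[symmetric])

lemma dyadic_inner_self_le:
  assumes "L2_01 u"
  shows "dyadic_inner n u u \<le> (LBINT s:{0..1}. u s * u s)"
  using dyadic_defect_nonneg[of n u] dyadic_defect_eq[OF assms] by (simp add: power2_eq_square)

lemma dyadic_defect_const: "dyadic_defect n (\<lambda>_. c) = 0"
  unfolding dyadic_defect_def dyadic_integral_def set_integral_dyadic_interval_const by simp

lemma dyadic_defect_cmult: "dyadic_defect n (\<lambda>s. c * u s) = c\<^sup>2 * dyadic_defect n u"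
proof -
  have "(c * x - 2^n * (c * a))\<^sup>2 = c\<^sup>2 * (x - 2^n * a)\<^sup>2" for x a :: real
    by (simp add: power2_eq_square algebra_simps)
  then show ?thesis
    by (simp add: dyadic_defect_def dyadic_integral_cmult sum_distrib_left)
qed

lemma dyadic_defect_add_le:
  assumes "L2_01 u" "L2_01 v"
  shows "dyadic_defect n (\<lambda>s. u s + v s) \<le> 2 * dyadic_defect n u + 2 * dyadic_defect n v"
proof -
  have sq_int: "set_integrable lborel (dyadic_interval n k) (\<lambda>s. (w s - c)\<^sup>2)"
    if "L2_01 w" "k < 2^n" for w c k
    using L2_01_integrable_on(2)[OF L2_01_diff[OF that(1) L2_01_const] _ dyadic_interval_subset[OF that(2)]]
    by simp
  have "(LBINT s:dyadic_interval n k. (u s + v s - 2^n * dyadic_integral n (\<lambda>s. u s + v s) k)\<^sup>2)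
        \<le> 2 * (LBINT s:dyadic_interval n k. (u s - 2^n * dyadic_integral n u k)\<^sup>2)
          + 2 * (LBINT s:dyadic_interval n k. (v s - 2^n * dyadic_integral n v k)\<^sup>2)"
    if k: "k < 2^n" for k
  proof -
    define a b where "a = 2^n * dyadic_integral n u k" and "b = 2^n * dyadic_integral n v k"
    have "(u s + v s - (a + b))\<^sup>2 \<le> 2 * (u s - a)\<^sup>2 + 2 * (v s - b)\<^sup>2" for s
      using sum_squares_bound[of "u s - a" "v s - b"] by (simp add: power2_eq_square algebra_simps)
    then have "(LBINT s:dyadic_interval n k. (u s + v s - (a + b))\<^sup>2)
        \<le> (LBINT s:dyadic_interval n k. 2 * (u s - a)\<^sup>2 + 2 * (v s - b)\<^sup>2)"
      using sq_int[OF L2_01_add[OF assms] k] sq_int[OF assms(1) k] sq_int[OF assms(2) k]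
      by (intro set_integral_mono) auto
    then show ?thesis
      using sq_int[OF assms(1) k] sq_int[OF assms(2) k]
      by (simp add: a_def b_def dyadic_integral_add[OF assms k] distrib_left)
  qed
  then show ?thesis
    unfolding dyadic_defect_def sum_distrib_left sum.distrib[symmetric] by (intro sum_mono) simp
qed

lemma dyadic_defect_diff_le:
  assumes "L2_01 u" "L2_01 v"
  shows "dyadic_defect n (\<lambda>s. u s - v s) \<le> 2 * dyadic_defect n u + 2 * dyadic_defect n v"
  using dyadic_defect_add_le[OF assms(1) L2_01_cmult[OF assms(2)], of n "-1"]
    dyadic_defect_cmult[of n "-1" v]
  by simp

lemma dyadic_local_variance_const:
  fixes c :: real
  assumes "\<And>x. x \<in> dyadic_interval n k \<Longrightarrow> u x = c"
  shows "(LBINT s:dyadic_interval n k. (u s - 2^n * dyadic_integral n u k)\<^sup>2) = 0"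
proof -
  have "dyadic_integral n u k = (LBINT s:dyadic_interval n k. c)"
    unfolding dyadic_integral_def using assms by (intro set_lebesgue_integral_cong) auto
  then have "dyadic_integral n u k = c / 2^n"
    by (simp add: set_integral_dyadic_interval_const)
  then show ?thesis
    using assms by (simp add: set_lebesgue_integral_cong[where g="\<lambda>_. 0"])
qed

lemma dyadic_defect_indicator_atMost: "dyadic_defect n (indicator {..a}) \<le> 1 / 2^n"
proof -
  let ?u = "indicator {..a} :: real \<Rightarrow> real"
  define k\<^sub>0 where "k\<^sub>0 = nat \<lfloor>a * 2^n\<rfloor>"
  have "(LBINT s:dyadic_interval n k. (?u s - 2^n * dyadic_integral n ?u k)\<^sup>2)
        \<le> (if k = k\<^sub>0 then 1 / 2^n else 0)" if k: "k < 2^n" for k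
  proof (cases "real (Suc k) / 2^n \<le> a \<or> a < real k / 2^n")
    case True
    then have "\<exists>c. \<forall>x\<in>dyadic_interval n k. ?u x = c"
      by (auto simp: dyadic_interval_def)
    then show ?thesis
      using dyadic_local_variance_const by fastforce
  next
    case False
    then have "real k \<le> a * 2^n" "a * 2^n < real k + 1"
      by (auto simp: field_simps)
    then have "k = k\<^sub>0"
      unfolding k\<^sub>0_def by (metis floor_unique nat_int of_int_of_nat_eq)
    have "(LBINT s:dyadic_interval n k. (?u s - 2^n * dyadic_integral n ?u k)\<^sup>2)
          \<le> (LBINT s:dyadic_interval n k. (?u s)\<^sup>2)"
      using set_integral_dyadic_variance[OF L2_01_indicator k] by simp
    also have "\<dots> \<le> (LBINT s:dyadic_interval n k. 1)"
      using L2_01_integrable_on(2)[OF L2_01_indicator[OF atMost_borel] _ dyadic_interval_subset[OF k]]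
      by (intro set_integral_mono) (auto simp: indicator_def)
    finally show ?thesis
      using \<open>k = k\<^sub>0\<close> by (simp add: set_integral_dyadic_interval_const)
  qed
  then have "dyadic_defect n ?u \<le> (\<Sum>k<2^n. if k = k\<^sub>0 then 1 / 2^n else 0)"
    unfolding dyadic_defect_def by (intro sum_mono) simp
  also have "\<dots> \<le> 1 / 2^n"
    by simp
  finally show ?thesis .
qed

lemma dyadic_inner_polarization:
  assumes "L2_01 u" "L2_01 v"
  shows "4 * dyadic_inner n u v =
         dyadic_inner n (\<lambda>s. u s + v s) (\<lambda>s. u s + v s) - dyadic_inner n (\<lambda>s. u s - v s) (\<lambda>s. u s - v s)"
proof -
  have "4 * (\<Sum>k<2^n. dyadic_integral n u k * dyadic_integral n v k) =
        (\<Sum>k<2^n. dyadic_integral n (\<lambda>s. u s + v s) k * dyadic_integral n (\<lambda>s. u s + v s) k) -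
        (\<Sum>k<2^n. dyadic_integral n (\<lambda>s. u s - v s) k * dyadic_integral n (\<lambda>s. u s - v s) k)"
    unfolding sum_subtractf[symmetric] sum_distrib_left
    by (intro sum.cong refl) (simp add: dyadic_integral_add dyadic_integral_diff assms algebra_simps)
  then show ?thesis
    unfolding dyadic_inner_def by (simp add: right_diff_distrib[symmetric])
qed

section \<open>Convergence of the dyadic inner products\<close>

text \<open>The defect vanishes for indicators of half-lines, which are constant on all but one dyadic
  interval of each level; the functions with vanishing defect form a vector space closed under
  dominated pointwise limits, so a Dynkin argument and monotone approximation reach all of \<open>L\<^sup>2\<close>.\<close>

definition dyadic_defect_vanishes :: "(real \<Rightarrow> real) \<Rightarrow> bool" where
  "dyadic_defect_vanishes u \<longleftrightarrow> (\<lambda>n. dyadic_defect n u) \<longlonglongrightarrow> 0"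

lemma dyadic_defect_vanishes_const: "dyadic_defect_vanishes (\<lambda>_. c)"
  unfolding dyadic_defect_vanishes_def dyadic_defect_const by simp

lemma dyadic_defect_vanishes_cmult:
  "dyadic_defect_vanishes u \<Longrightarrow> dyadic_defect_vanishes (\<lambda>s. c * u s)"
  unfolding dyadic_defect_vanishes_def dyadic_defect_cmult by (auto intro: tendsto_eq_intros)

lemma dyadic_defect_vanishes_bounded:
  assumes "dyadic_defect_vanishes u" "dyadic_defect_vanishes v"
    and "\<And>n. dyadic_defect n w \<le> 2 * dyadic_defect n u + 2 * dyadic_defect n v"
  shows "dyadic_defect_vanishes w"
  unfolding dyadic_defect_vanishes_def
proof (rule tendsto_sandwich[where f="\<lambda>_. 0"])
  have "(\<lambda>n. 2 * dyadic_defect n u + 2 * dyadic_defect n v) \<longlonglongrightarrow> 2 * 0 + 2 * 0"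
    using assms(1,2) unfolding dyadic_defect_vanishes_def by (intro tendsto_intros)
  then show "(\<lambda>n. 2 * dyadic_defect n u + 2 * dyadic_defect n v) \<longlonglongrightarrow> 0"
    by simp
qed (use assms(3) dyadic_defect_nonneg in auto)

lemma dyadic_defect_vanishes_add:
  assumes "L2_01 u" "L2_01 v" "dyadic_defect_vanishes u" "dyadic_defect_vanishes v"
  shows "dyadic_defect_vanishes (\<lambda>s. u s + v s)"
  using dyadic_defect_vanishes_bounded[OF assms(3,4) dyadic_defect_add_le[OF assms(1,2)]] .

lemma dyadic_defect_vanishes_diff:
  assumes "L2_01 u" "L2_01 v" "dyadic_defect_vanishes u" "dyadic_defect_vanishes v"
  shows "dyadic_defect_vanishes (\<lambda>s. u s - v s)"
  using dyadic_defect_vanishes_bounded[OF assms(3,4) dyadic_defect_diff_le[OF assms(1,2)]] .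

lemma dyadic_defect_vanishes_limit:
  fixes U :: "nat \<Rightarrow> real \<Rightarrow> real"
  assumes u: "L2_01 u" and U: "\<And>m. L2_01 (U m)" "\<And>m. dyadic_defect_vanishes (U m)"
    and lim: "\<And>t. (\<lambda>m. U m t) \<longlonglongrightarrow> u t"
    and bound: "\<And>m t. (u t - U m t)\<^sup>2 \<le> w t" "set_integrable lborel {0..1} w"
  shows "dyadic_defect_vanishes u"
  unfolding dyadic_defect_vanishes_def
proof (rule LIMSEQ_I)
  fix r :: real
  assume "0 < r"
  have "(\<lambda>m. LBINT t:{0..1}. (u t - U m t)\<^sup>2) \<longlonglongrightarrow> 0"
    using u U(1) lim bound by (intro L2_01_tendsto_dominated) auto
  from LIMSEQ_D[OF this, of "r / 4"] \<open>0 < r\<close>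
  obtain m where m: "norm ((LBINT t:{0..1}. (u t - U m t)\<^sup>2) - 0) < r / 4"
    by (meson order_refl zero_less_divide_iff zero_less_numeral)
  obtain N where N: "\<And>n. N \<le> n \<Longrightarrow> norm (dyadic_defect n (U m) - 0) < r / 4"
    using LIMSEQ_D[OF U(2)[of m, unfolded dyadic_defect_vanishes_def], of "r / 4"] \<open>0 < r\<close>
    by fastforce
  have "norm (dyadic_defect n u - 0) < r" if "N \<le> n" for n
  proof -
    have "dyadic_defect n u = dyadic_defect n (\<lambda>s. U m s + (u s - U m s))"
      by simp
    also have "\<dots> \<le> 2 * dyadic_defect n (U m) + 2 * dyadic_defect n (\<lambda>s. u s - U m s)"
      using U(1) u by (intro dyadic_defect_add_le L2_01_diff)
    also have "dyadic_defect n (\<lambda>s. u s - U m s) \<le> (LBINT t:{0..1}. (u t - U m t)\<^sup>2)"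
      using U(1) u by (intro dyadic_defect_le L2_01_diff)
    finally show ?thesis
      using N[OF that] m dyadic_defect_nonneg[of n u] by (simp add: abs_less_iff)
  qed
  then show "\<exists>N. \<forall>n\<ge>N. norm (dyadic_defect n u - 0) < r"
    by blast
qed

lemma dyadic_defect_vanishes_indicator_atMost: "dyadic_defect_vanishes (indicator {..a})"
  unfolding dyadic_defect_vanishes_def
proof (rule tendsto_sandwich[where f="\<lambda>_. 0"])
  show "(\<lambda>n. 1 / 2^n :: real) \<longlonglongrightarrow> 0"
    by (simp add: divide_inverse LIMSEQ_inverse_realpow_zero)
qed (use dyadic_defect_indicator_atMost dyadic_defect_nonneg in auto)

lemma dyadic_defect_vanishes_disjoint_UN:
  fixes F :: "nat \<Rightarrow> real set"
  assumes "disjoint_family F" "\<And>i. F i \<in> sets borel"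
    and "\<And>i. dyadic_defect_vanishes (indicator (F i))"
  shows "dyadic_defect_vanishes (indicator (\<Union>i. F i))"
proof -
  define V where "V m = (\<Union>i<m. F i)" for m
  have V: "V m \<in> sets borel" for m
    unfolding V_def using assms(2) by auto
  have vanishes: "dyadic_defect_vanishes (indicator (V m))" for m
  proof (induction m)
    case 0
    then show ?case
      using dyadic_defect_vanishes_const[of 0] by (simp add: V_def)
  next
    case (Suc m)
    have "F i \<inter> F m = {}" if "i < m" for i
      using that by (intro disjoint_family_onD[OF assms(1)]) auto
    then have "V m \<inter> F m = {}"
      unfolding V_def by blast
    moreover have "V (Suc m) = V m \<union> F m"
      unfolding V_def lessThan_Suc by blast
    ultimately have "indicator (V (Suc m)) = (\<lambda>s. indicator (V m) s + indicator (F m) s :: real)"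
      by (simp add: indicator_disj_union fun_eq_iff)
    then show ?case
      using Suc assms(2,3) by (simp add: dyadic_defect_vanishes_add L2_01_indicator V)
  qed
  have lim: "(\<lambda>m. indicator (V m) t) \<longlonglongrightarrow> indicator (\<Union>i. F i) t" for t :: real
    unfolding V_def by (rule LIMSEQ_indicator_UN)
  have bound: "(indicator (\<Union>i. F i) t - indicator (V m) t :: real)\<^sup>2 \<le> 1" for m t
    by (simp split: split_indicator)
  have "(\<Union>i. F i) \<in> sets borel"
    using assms(2) by auto
  then show ?thesis
    using dyadic_defect_vanishes_limit[where U="\<lambda>m. indicator (V m)",
        OF L2_01_indicator[OF \<open>(\<Union>i. F i) \<in> sets borel\<close>] L2_01_indicator[OF V] vanishes lim bound]
    by simp
qed

lemma dyadic_defect_vanishes_indicator: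
  assumes "A \<in> sets (borel :: real measure)"
  shows "dyadic_defect_vanishes (indicator A)"
proof -
  have borel_eq: "sets (borel :: real measure) = sigma_sets UNIV (range atMost)"
    by (subst borel_eq_atMost) simp
  have "Int_stable (range (atMost :: real \<Rightarrow> real set))"
    by (auto simp: Int_stable_def intro!: exI[of _ "min _ _"])
  moreover have "range (atMost :: real \<Rightarrow> real set) \<subseteq> Pow UNIV"
    by simp
  moreover have "A \<in> sigma_sets UNIV (range atMost)"
    using assms borel_eq by simp
  ultimately show ?thesis
  proof (induction rule: sigma_sets_induct_disjoint)
    case (basic B)
    then show ?case
      using dyadic_defect_vanishes_indicator_atMost by auto
  next
    case empty
    then show ?case
      using dyadic_defect_vanishes_const[of 0] by simp
  next
    case (compl B)
    then have "dyadic_defect_vanishes (\<lambda>s. 1 - indicator B s)"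
      using borel_eq by (intro dyadic_defect_vanishes_diff L2_01_indicator dyadic_defect_vanishes_const) auto
    moreover have "indicator (UNIV - B) = (\<lambda>s. 1 - indicator B s :: real)"
      by (rule ext) (simp split: split_indicator)
    ultimately show ?case
      by simp
  next
    case (union F)
    show ?case
    proof (rule dyadic_defect_vanishes_disjoint_UN)
      show "F i \<in> sets borel" for i
        using union.hyps(2) borel_eq by auto
    qed (use union in auto)
  qed
qed

lemma dyadic_defect_vanishes_incseq:
  fixes U :: "nat \<Rightarrow> real \<Rightarrow> real"
  assumes u: "L2_01 u"
    and U: "\<And>i. U i \<in> borel_measurable borel" "\<And>i t. 0 \<le> U i t" "incseq U"
    and lim: "\<And>t. (\<lambda>i. U i t) \<longlonglongrightarrow> u t"
    and vanishes: "\<And>i. L2_01 (U i) \<Longrightarrow> dyadic_defect_vanishes (U i)"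
  shows "dyadic_defect_vanishes u"
proof -
  have le: "U i t \<le> u t" for i t
    using U(3) lim[of t] by (intro incseq_le) (auto simp: incseq_def le_fun_def)
  have "\<bar>U i t\<bar> \<le> \<bar>u t\<bar>" for i t
    using le[of i t] U(2)[of i t] by arith
  then have LU: "L2_01 (U i)" for i
    using U(1) by (intro L2_01_dominated[OF u])
  have "(u t - U i t)\<^sup>2 \<le> (u t)\<^sup>2" for i t
    using le[of i t] U(2)[of i t] by (intro power_mono) auto
  from dyadic_defect_vanishes_limit[OF u LU vanishes[OF LU] lim this L2_01_square_integrable[OF u]]
  show ?thesis .
qed

lemma dyadic_defect_vanishes_nonneg:
  assumes "L2_01 u" "\<And>t. 0 \<le> u t"
  shows "dyadic_defect_vanishes u"
proof -
  have "u \<in> borel_measurable lborel"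
    using assms(1) by simp
  then have "L2_01 u \<longrightarrow> dyadic_defect_vanishes u"
    using assms(2)
  proof (induction rule: borel_measurable_induct_real)
    case (set A)
    then show ?case
      by (simp add: dyadic_defect_vanishes_indicator)
  next
    case (mult u c)
    show ?case
    proof (cases "c = 0")
      case True
      then show ?thesis
        using dyadic_defect_vanishes_const[of 0] by simp
    next
      case False
      then have "L2_01 (\<lambda>t. c * u t) \<Longrightarrow> L2_01 u"
        using L2_01_cmult[of "\<lambda>t. c * u t" "1 / c"] by simp
      then show ?thesis
        using mult.IH by (auto intro: dyadic_defect_vanishes_cmult)
    qed
  next
    case (add u v)
    have "L2_01 u \<and> L2_01 v" if "L2_01 (\<lambda>t. v t + u t)"
      using add.hyps by (auto intro!: L2_01_dominated[OF that])
    then show ?case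
      using add.IH by (auto intro: dyadic_defect_vanishes_add)
  next
    case (seq U)
    show ?case
    proof
      assume "L2_01 u"
      then show "dyadic_defect_vanishes u"
        by (rule dyadic_defect_vanishes_incseq[where U=U]) (use seq in auto)
    qed
  qed
  then show ?thesis
    using assms(1) by simp
qed

lemma dyadic_defect_vanishes_L2:
  assumes "L2_01 u"
  shows "dyadic_defect_vanishes u"
proof -
  have "L2_01 (\<lambda>t. max (u t) 0)" "L2_01 (\<lambda>t. max (- u t) 0)"
    using assms by (auto intro!: L2_01_dominated[OF assms])
  then have "dyadic_defect_vanishes (\<lambda>t. max (u t) 0 - max (- u t) 0)"
    by (intro dyadic_defect_vanishes_diff dyadic_defect_vanishes_nonneg) auto
  moreover have "(\<lambda>t. max (u t) 0 - max (- u t) 0) = u"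
    by (auto simp: max_def)
  ultimately show ?thesis
    by simp
qed

theorem dyadic_inner_tendsto:
  assumes "L2_01 u" "L2_01 v"
  shows "(\<lambda>n. dyadic_inner n u v) \<longlonglongrightarrow> (LBINT s:{0..1}. u s * v s)"
proof -
  have square: "(\<lambda>n. dyadic_inner n w w) \<longlonglongrightarrow> (LBINT s:{0..1}. w s * w s)" if "L2_01 w" for w
  proof -
    have "(\<lambda>n. (LBINT s:{0..1}. (w s)\<^sup>2) - dyadic_defect n w) \<longlonglongrightarrow> (LBINT s:{0..1}. (w s)\<^sup>2) - 0"
      using dyadic_defect_vanishes_L2[OF that] unfolding dyadic_defect_vanishes_def
      by (intro tendsto_diff tendsto_const)
    then show ?thesis
      by (simp add: dyadic_defect_eq[OF that] power2_eq_square)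
  qed
  let ?p = "\<lambda>s. u s + v s" and ?m = "\<lambda>s. u s - v s"
  have "(\<lambda>n. (dyadic_inner n ?p ?p - dyadic_inner n ?m ?m) / 4) \<longlonglongrightarrow>
        ((LBINT s:{0..1}. ?p s * ?p s) - (LBINT s:{0..1}. ?m s * ?m s)) / 4"
    using assms by (intro tendsto_divide tendsto_diff square L2_01_add L2_01_diff tendsto_const) simp_all
  also have "(LBINT s:{0..1}. ?p s * ?p s) - (LBINT s:{0..1}. ?m s * ?m s) =
             (LBINT s:{0..1}. ?p s * ?p s - ?m s * ?m s)"
    using assms by (intro set_integral_diff(2)[symmetric] L2_01_mult_integrable L2_01_add L2_01_diff)
  also have "\<dots> = (LBINT s:{0..1}. 4 * (u s * v s))"
    by (intro set_lebesgue_integral_cong) (simp_all add: algebra_simps)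
  also have "(\<lambda>n. (dyadic_inner n ?p ?p - dyadic_inner n ?m ?m) / 4) = (\<lambda>n. dyadic_inner n u v)"
    by (simp flip: dyadic_inner_polarization[OF assms])
  finally show ?thesis
    by simp
qed

section \<open>Gaussian estimates\<close>

definition dyadic_increment_sum :: "(real \<Rightarrow> 'a \<Rightarrow> real) \<Rightarrow> (nat \<Rightarrow> real) \<Rightarrow> nat \<Rightarrow> 'a \<Rightarrow> real" where
  "dyadic_increment_sum W d n \<omega> = (\<Sum>k<2^n. d k * (W (real (Suc k) / 2^n) \<omega> - W (real k / 2^n) \<omega>))"

lemma dyadic_increment_sum_measurable:
  assumes "\<And>t. t \<in> {0..1} \<Longrightarrow> W t \<in> borel_measurable N"
  shows "dyadic_increment_sum W d n \<in> borel_measurable N"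
proof -
  have "(\<lambda>\<omega>. d k * (W (real (Suc k) / 2^n) \<omega> - W (real k / 2^n) \<omega>)) \<in> borel_measurable N"
    if "k < 2^n" for k
  proof -
    note [measurable] = assms[OF dyadic_points(1)[OF that]] assms[OF dyadic_points(2)[OF that]]
    show ?thesis
      by measurable
  qed
  then show ?thesis
    unfolding dyadic_increment_sum_def[abs_def] by (intro borel_measurable_sum) auto
qed

lemma brownian_motion_01_dyadic_increments_indep:
  assumes "brownian_motion_01 M W"
  shows "prob_space.indep_vars M (\<lambda>_. borel)
           (\<lambda>k \<omega>. W (real (Suc k) / 2^n) \<omega> - W (real k / 2^n) \<omega>) {..<2^n}"
proof -
  define t where "t i = real i / 2^n" for i
  have "0 \<le> t 0" "t (2^n) \<le> 1" "\<forall>i<2^n. t i < t (Suc i)"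
    unfolding t_def by (auto simp: divide_strict_right_mono)
  then have "prob_space.indep_vars M (\<lambda>_. borel) (\<lambda>k \<omega>. W (t (Suc k)) \<omega> - W (t k) \<omega>) {..<2^n}"
    using assms unfolding brownian_motion_01_def by blast
  then show ?thesis
    unfolding t_def .
qed

lemma brownian_motion_01_dyadic_increment_distributed:
  assumes "brownian_motion_01 M W" "k < 2^n"
  shows "distributed M lborel (\<lambda>\<omega>. W (real (Suc k) / 2^n) \<omega> - W (real k / 2^n) \<omega>)
           (normal_density 0 (sqrt (1 / 2^n)))"
proof -
  have increment: "distributed M lborel (\<lambda>\<omega>. W t \<omega> - W s \<omega>) (normal_density 0 (sqrt (t - s)))"
    if "0 \<le> s" "s < t" "t \<le> 1" for s t
    using assms(1) that unfolding brownian_motion_01_def by blast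
  have "0 \<le> real k / 2^n" "real k / 2^n < real (Suc k) / 2^n" "real (Suc k) / 2^n \<le> 1"
    using dyadic_points[OF assms(2)] by auto
  from increment[OF this] show ?thesis
    by (simp add: diff_divide_distrib[symmetric])
qed

lemma dyadic_increment_sum_distributed:
  assumes bm: "brownian_motion_01 M W" and nonzero: "\<exists>k<2^n. d k \<noteq> 0"
  shows "distributed M lborel (dyadic_increment_sum W d n)
           (normal_density 0 (sqrt (\<Sum>k<2^n. (d k)\<^sup>2 / 2^n)))"
proof -
  interpret prob_space M
    using bm unfolding brownian_motion_01_def by simp
  define K where "K = {k. k < 2^n \<and> d k \<noteq> 0}"
  define X where "X k \<omega> = d k * (W (real (Suc k) / 2^n) \<omega> - W (real k / 2^n) \<omega>)" for k \<omega>
  have "indep_vars (\<lambda>_. borel) X {..<2^n}"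
    unfolding X_def using brownian_motion_01_dyadic_increments_indep[OF bm]
    by (rule indep_vars_compose2[where Y="\<lambda>k x. d k * x"]) simp
  then have "indep_vars (\<lambda>_. borel) X K"
    unfolding K_def by (rule indep_vars_subset) auto
  moreover have "distributed M lborel (X k) (normal_density 0 (\<bar>d k\<bar> * sqrt (1 / 2^n)))" if "k \<in> K" for k
  proof -
    have "k < 2^n" "d k \<noteq> 0"
      using that unfolding K_def by auto
    from normal_density_affine[OF brownian_motion_01_dyadic_increment_distributed[OF bm \<open>k < 2^n\<close>],
        where \<alpha>="d k" and \<beta>=0] \<open>d k \<noteq> 0\<close>
    show ?thesis
      unfolding X_def by simp
  qed
  ultimately have "distributed M lborel (\<lambda>\<omega>. \<Sum>k\<in>K. X k \<omega>)
      (normal_density (\<Sum>k\<in>K. 0) (sqrt (\<Sum>k\<in>K. (\<bar>d k\<bar> * sqrt (1 / 2^n))\<^sup>2)))"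
    using nonzero by (intro sum_indep_normal) (auto simp: K_def)
  moreover have "(\<lambda>\<omega>. \<Sum>k\<in>K. X k \<omega>) = dyadic_increment_sum W d n"
    unfolding dyadic_increment_sum_def X_def K_def by (intro ext sum.mono_neutral_left) auto
  moreover have "(\<Sum>k\<in>K. (\<bar>d k\<bar> * sqrt (1 / 2^n))\<^sup>2) = (\<Sum>k\<in>K. (d k)\<^sup>2 / 2^n)"
    by (intro sum.cong refl) (simp add: power_mult_distrib)
  moreover have "\<dots> = (\<Sum>k<2^n. (d k)\<^sup>2 / 2^n)"
    unfolding K_def by (intro sum.mono_neutral_left) auto
  ultimately show ?thesis
    by simp
qed

lemma (in prob_space) normal_interval_prob_ge:
  assumes Z: "distributed M lborel Z (normal_density 0 \<sigma>)" and "0 < \<sigma>" "u \<le> v"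
    and bound: "\<And>x. x \<in> {u..v} \<Longrightarrow> \<bar>x\<bar> \<le> \<sigma> * R"
  shows "(v - u) * exp (- R\<^sup>2 / 2) / (\<sigma> * sqrt (2 * pi)) \<le> prob {\<omega> \<in> space M. Z \<omega> \<in> {u..v}}"
proof -
  define c where "c = exp (- R\<^sup>2 / 2) / (\<sigma> * sqrt (2 * pi))"
  have "c \<le> normal_density 0 \<sigma> x" if "x \<in> {u..v}" for x
  proof -
    have "x\<^sup>2 \<le> (\<sigma> * R)\<^sup>2"
      using power_mono[OF bound[OF that] abs_ge_zero, of 2] by simp
    then have "exp (- R\<^sup>2 / 2) \<le> exp (- x\<^sup>2 / (2 * \<sigma>\<^sup>2))"
      using \<open>0 < \<sigma>\<close> by (simp add: field_simps)
    moreover have "sqrt (2 * pi * \<sigma>\<^sup>2) = \<sigma> * sqrt (2 * pi)"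
      using \<open>0 < \<sigma>\<close> by (simp add: real_sqrt_mult mult.commute)
    ultimately show ?thesis
      unfolding c_def normal_density_def using \<open>0 < \<sigma>\<close> by (simp add: divide_right_mono)
  qed
  then have "(\<integral>\<^sup>+x. ennreal c * indicator {u..v} x \<partial>lborel)
      \<le> (\<integral>\<^sup>+x. ennreal (normal_density 0 \<sigma> x) * indicator {u..v} x \<partial>lborel)"
    by (intro nn_integral_mono) (auto simp: indicator_def)
  also have "\<dots> = emeasure M (Z -` {u..v} \<inter> space M)"
    using distributed_emeasure[OF Z, of "{u..v}"] by simp
  finally have "ennreal c * ennreal (v - u) \<le> ennreal (prob (Z -` {u..v} \<inter> space M))"
    using \<open>u \<le> v\<close> by (simp add: nn_integral_cmult_indicator emeasure_eq_measure)
  then have "c * (v - u) \<le> prob (Z -` {u..v} \<inter> space M)"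
    using \<open>u \<le> v\<close> \<open>0 < \<sigma>\<close> by (simp add: c_def flip: ennreal_mult)
  moreover have "Z -` {u..v} \<inter> space M = {\<omega> \<in> space M. Z \<omega> \<in> {u..v}}"
    by auto
  ultimately show ?thesis
    by (simp add: c_def mult.commute)
qed

lemma (in prob_space) normal_abs_band_prob_ge:
  assumes Z: "distributed M lborel Z (normal_density 0 \<sigma>)" and "0 < \<sigma>" "0 < a" "a \<le> b"
    and bound: "b + \<bar>m\<bar> \<le> \<sigma> * R"
  shows "2 * (b - a) * exp (- R\<^sup>2 / 2) / (\<sigma> * sqrt (2 * pi))
           \<le> prob {\<omega> \<in> space M. a \<le> \<bar>m + Z \<omega>\<bar> \<and> \<bar>m + Z \<omega>\<bar> \<le> b}"
proof -
  define c where "c = (b - a) * exp (- R\<^sup>2 / 2) / (\<sigma> * sqrt (2 * pi))"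
  have [measurable]: "Z \<in> borel_measurable M"
    using distributed_measurable[OF Z] by simp
  have small: "\<bar>x\<bar> \<le> \<sigma> * R" if "\<bar>m + x\<bar> \<le> b" for x
    using abs_triangle_ineq4[of "m + x" m] that bound by simp
  let ?P = "{\<omega> \<in> space M. Z \<omega> \<in> {a - m..b - m}}" and ?N = "{\<omega> \<in> space M. Z \<omega> \<in> {- b - m..- a - m}}"
  have "c \<le> prob ?P"
    unfolding c_def using \<open>a \<le> b\<close> \<open>0 < a\<close>
      normal_interval_prob_ge[OF Z \<open>0 < \<sigma>\<close>, of "a - m" "b - m" R] small
    by (simp add: abs_le_iff)
  moreover have "c \<le> prob ?N"
    unfolding c_def using \<open>a \<le> b\<close> \<open>0 < a\<close>
      normal_interval_prob_ge[OF Z \<open>0 < \<sigma>\<close>, of "- b - m" "- a - m" R] small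
    by (simp add: abs_le_iff)
  moreover have "prob (?P \<union> ?N) = prob ?P + prob ?N"
    using \<open>0 < a\<close> by (intro finite_measure_Union) auto
  moreover have "?P \<union> ?N = {\<omega> \<in> space M. a \<le> \<bar>m + Z \<omega>\<bar> \<and> \<bar>m + Z \<omega>\<bar> \<le> b}"
    using \<open>0 < a\<close> \<open>a \<le> b\<close> by (auto split: abs_split)
  ultimately have "2 * c \<le> prob {\<omega> \<in> space M. a \<le> \<bar>m + Z \<omega>\<bar> \<and> \<bar>m + Z \<omega>\<bar> \<le> b}"
    by simp
  then show ?thesis
    by (simp only: c_def times_divide_eq_right mult.assoc)
qed

lemma gaussian_factor_le:
  assumes "0 \<le> D"
  shows "exp (- (1 + D / 2)\<^sup>2 / 2) / (2 * sqrt (2 * pi)) \<le> 2 / 15"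
proof -
  have "exp (- (1 + D / 2)\<^sup>2 / 2) \<le> exp (- (1 / 2))"
    using one_le_power[of "1 + D / 2" 2] assms by simp
  also have "\<dots> \<le> 2 / 3"
    using exp_ge_add_one_self[of "1 / 2"] by (simp add: exp_minus field_simps)
  finally have "exp (- (1 + D / 2)\<^sup>2 / 2) \<le> 2 / 3" .
  moreover have "(5 / 2)\<^sup>2 \<le> 2 * pi"
    using pi_approx by (simp add: power2_eq_square)
  then have "5 / 2 \<le> sqrt (2 * pi)"
    using real_sqrt_le_mono by fastforce
  ultimately have "exp (- (1 + D / 2)\<^sup>2 / 2) / (2 * sqrt (2 * pi)) \<le> (2 / 3) / (2 * (5 / 2))"
    by (intro frac_le) auto
  then show ?thesis
    by simp
qed

section \<open>The logistic function near zero\<close>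

definition logistic :: "real \<Rightarrow> real" where
  "logistic t = exp t / (1 + exp t)"

lemma logistic_minus_half: "logistic t - 1/2 = (exp t - 1) / (2 * (1 + exp t))"
proof -
  have "1 + exp t \<noteq> 0"
    by (metis add_pos_pos exp_gt_zero less_irrefl zero_less_one)
  then show ?thesis
    unfolding logistic_def by (simp add: field_simps)
qed

lemma logistic_minus_half_uminus: "logistic (- t) - 1/2 = - (logistic t - 1/2)"
proof -
  have "(1 / x - 1) / (2 * (1 + 1 / x)) = - ((x - 1) / (2 * (1 + x)))" if "0 < x" for x :: real
    using that by (simp add: divide_simps)
  then show ?thesis
    unfolding logistic_minus_half exp_minus inverse_eq_divide by simp
qed

lemma logistic_minus_half_nonneg: "0 \<le> t \<Longrightarrow> 0 \<le> logistic t - 1/2"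
  unfolding logistic_minus_half by (simp add: add_pos_pos)

lemma logistic_minus_half_le:
  assumes "0 \<le> t"
  shows "logistic t - 1/2 \<le> t / 2"
proof -
  have "exp t * (1 - t) \<le> exp t * exp (- t)"
    using exp_ge_add_one_self[of "- t"] by (intro mult_left_mono) auto
  then have "exp t - 1 \<le> t * (1 + exp t)"
    using assms by (simp add: exp_minus_inverse algebra_simps)
  then show ?thesis
    unfolding logistic_minus_half by (simp add: divide_simps add_pos_pos) (simp add: algebra_simps)
qed

lemma logistic_minus_half_ge:
  assumes "0 \<le> t" "t \<le> 1/4"
  shows "6/25 * t \<le> logistic t - 1/2"
proof -
  have "t\<^sup>2 \<le> 1/16"
    using power_mono[OF assms(2) assms(1), of 2] by (simp add: power2_eq_square)
  then have "0 \<le> t * (1 + t/2 - 6 * t\<^sup>2)"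
    using assms by (intro mult_nonneg_nonneg) auto
  moreover have "(1 + t + t\<^sup>2 / 2) * (25 - 12 * t) = 25 + 12 * t + t * (1 + t/2 - 6 * t\<^sup>2)"
    by (simp add: algebra_simps power2_eq_square power3_eq_cube)
  ultimately have "25 + 12 * t \<le> (1 + t + t\<^sup>2 / 2) * (25 - 12 * t)"
    by simp
  also have "\<dots> \<le> exp t * (25 - 12 * t)"
    using exp_lower_Taylor_quadratic[OF assms(1)] assms(2) by (intro mult_right_mono) auto
  finally have "12 * t * (1 + exp t) \<le> 25 * (exp t - 1)"
    by (simp add: algebra_simps)
  then show ?thesis
    unfolding logistic_minus_half by (simp add: divide_simps add_pos_pos) (simp add: algebra_simps)
qed

lemma abs_logistic_minus_half: "\<bar>logistic t - 1/2\<bar> = logistic \<bar>t\<bar> - 1/2"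
  using logistic_minus_half_nonneg[of t] logistic_minus_half_nonneg[of "- t"]
    logistic_minus_half_uminus[of t]
  by (cases "0 \<le> t") auto

lemma logistic_band:
  assumes "0 \<le> a" "a \<le> \<bar>t\<bar>" "\<bar>t\<bar> \<le> b" "b \<le> 1/4"
  shows "6/25 * a \<le> \<bar>logistic t - 1/2\<bar>" "\<bar>logistic t - 1/2\<bar> \<le> b / 2"
  using logistic_minus_half_ge[of "\<bar>t\<bar>"] logistic_minus_half_le[of "\<bar>t\<bar>"] assms
  unfolding abs_logistic_minus_half by auto

lemma eta_reg_eq_logistic:
  "eta_reg f g x = logistic (x - ((L2_norm_01 f)\<^sup>2 - (L2_norm_01 g)\<^sup>2) / 2)"
proof -
  have "x - ((L2_norm_01 f)\<^sup>2 - (L2_norm_01 g)\<^sup>2) / 2 = x - (L2_norm_01 f)\<^sup>2 / 2 + (L2_norm_01 g)\<^sup>2 / 2"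
    by (simp add: field_simps)
  then show ?thesis
    by (simp only: eta_reg_def logistic_def Let_def)
qed

lemma logistic_band_of_approx:
  assumes "\<bar>s - x\<bar> \<le> e" "a + e \<le> \<bar>s - c\<bar>" "\<bar>s - c\<bar> \<le> b - e" "0 \<le> a" "b \<le> 1/4"
  shows "6/25 * a \<le> \<bar>logistic (x - c) - 1/2\<bar>" "\<bar>logistic (x - c) - 1/2\<bar> \<le> b / 2"
proof -
  have "a \<le> \<bar>x - c\<bar>" "\<bar>x - c\<bar> \<le> b"
    using assms(1-3) by linarith+
  then show "6/25 * a \<le> \<bar>logistic (x - c) - 1/2\<bar>" "\<bar>logistic (x - c) - 1/2\<bar> \<le> b / 2"
    using logistic_band assms(4,5) by blast+
qed

section \<open>The two-class signal model\<close>

lemma dyadic_stoch_sum_model_X: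
  assumes "set_integrable lborel {0..1} f" "set_integrable lborel {0..1} g"
  shows "dyadic_stoch_sum (model_X f g Y W) u n \<omega> =
    Y \<omega> * dyadic_inner n u f + (1 - Y \<omega>) * dyadic_inner n u g
      + dyadic_increment_sum W (\<lambda>k. 2^n * dyadic_integral n u k) n \<omega>"
proof -
  have "dyadic_stoch_sum (model_X f g Y W) u n \<omega> =
        (\<Sum>k<2^n. (2^n * dyadic_integral n u k) *
           (Y \<omega> * dyadic_integral n f k + (1 - Y \<omega>) * dyadic_integral n g k
             + (W (real (Suc k) / 2^n) \<omega> - W (real k / 2^n) \<omega>)))"
    unfolding dyadic_stoch_sum_def
  proof (intro sum.cong refl)
    fix k assume "k \<in> {..<(2::nat)^n}"
    then have "model_X f g Y W (real (Suc k) / 2^n) \<omega> - model_X f g Y W (real k / 2^n) \<omega> =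
        Y \<omega> * dyadic_integral n f k + (1 - Y \<omega>) * dyadic_integral n g k
          + (W (real (Suc k) / 2^n) \<omega> - W (real k / 2^n) \<omega>)"
      using set_integral_dyadic_step[OF assms(1)] set_integral_dyadic_step[OF assms(2)]
      by (simp add: model_X_def algebra_simps)
    then show "2^n * (LBINT s:{real k / 2^n..real (Suc k) / 2^n}. u s) *
        (model_X f g Y W (real (Suc k) / 2^n) \<omega> - model_X f g Y W (real k / 2^n) \<omega>) =
        2^n * dyadic_integral n u k *
        (Y \<omega> * dyadic_integral n f k + (1 - Y \<omega>) * dyadic_integral n g k
          + (W (real (Suc k) / 2^n) \<omega> - W (real k / 2^n) \<omega>))"
      by (simp only: dyadic_integral_def dyadic_interval_def)
  qed
  also have "\<dots> = Y \<omega> * dyadic_inner n u f + (1 - Y \<omega>) * dyadic_inner n u g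
      + dyadic_increment_sum W (\<lambda>k. 2^n * dyadic_integral n u k) n \<omega>"
  proof -
    have linear: "(\<Sum>k\<in>K. a k * (y * b k + z * c k + w k)) =
        y * (\<Sum>k\<in>K. a k * b k) + z * (\<Sum>k\<in>K. a k * c k) + (\<Sum>k\<in>K. a k * w k)"
      for a b c w :: "nat \<Rightarrow> real" and y z K
      by (simp add: sum.distrib sum_distrib_left distrib_left mult.left_commute)
    have "dyadic_inner n u v = (\<Sum>k<2^n. (2^n * dyadic_integral n u k) * dyadic_integral n v k)" for v
      unfolding dyadic_inner_def by (simp add: sum_distrib_left mult.assoc)
    then show ?thesis
      unfolding dyadic_increment_sum_def by (simp only: linear)
  qed
  finally show ?thesis .
qed

locale binary_signal_model = prob_space M
  for M :: "'a measure" and Y :: "'a \<Rightarrow> real" and W :: "real \<Rightarrow> 'a \<Rightarrow> real"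
    and f g :: "real \<Rightarrow> real" and I :: "'a \<Rightarrow> real" +
  assumes L2_f: "L2_01 f" and L2_g: "L2_01 g"
    and separated: "0 < L2_norm_01 (\<lambda>t. f t - g t)"
    and Y_measurable [measurable]: "Y \<in> borel_measurable M"
    and Y_binary: "\<forall>\<omega>\<in>space M. Y \<omega> \<in> {0, 1}"
    and Y_fair: "prob {\<omega>\<in>space M. Y \<omega> = 1} = 1/2"
    and brownian: "brownian_motion_01 M W"
    and Y_indep_W: "indep_set
           (sigma_sets (space M) {Y -` A \<inter> space M | A. A \<in> sets borel})
           (sigma_sets (space M) (\<Union>t\<in>{0..1}. {W t -` A \<inter> space M | A. A \<in> sets borel}))"
    and stoch_integral: "is_stoch_integral M (model_X f g Y W) (\<lambda>t. f t - g t) I"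
begin

abbreviation contrast :: "real \<Rightarrow> real" where
  "contrast \<equiv> \<lambda>t. f t - g t"

abbreviation \<Delta> :: real where
  "\<Delta> \<equiv> L2_norm_01 contrast"

abbreviation centre :: real where
  "centre \<equiv> ((L2_norm_01 f)\<^sup>2 - (L2_norm_01 g)\<^sup>2) / 2"

abbreviation dyadic_sum :: "nat \<Rightarrow> 'a \<Rightarrow> real" where
  "dyadic_sum n \<equiv> dyadic_stoch_sum (model_X f g Y W) contrast n"

abbreviation noise :: "nat \<Rightarrow> 'a \<Rightarrow> real" where
  "noise n \<equiv> dyadic_increment_sum W (\<lambda>k. 2^n * dyadic_integral n contrast k) n"

lemma L2_contrast: "L2_01 contrast"
  using L2_f L2_g by (rule L2_01_diff)

lemma W_measurable: "t \<in> {0..1} \<Longrightarrow> W t \<in> borel_measurable M"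
  using brownian unfolding brownian_motion_01_def by blast

lemma I_measurable [measurable]: "I \<in> borel_measurable M"
  using stoch_integral unfolding is_stoch_integral_def by blast

lemma noise_measurable [measurable]: "noise n \<in> borel_measurable M"
  using W_measurable by (rule dyadic_increment_sum_measurable)

lemma dyadic_sum_eq:
  "dyadic_sum n = (\<lambda>\<omega>. Y \<omega> * dyadic_inner n contrast f + (1 - Y \<omega>) * dyadic_inner n contrast g + noise n \<omega>)"
  by (intro ext dyadic_stoch_sum_model_X L2_01_integrable L2_f L2_g)

lemma dyadic_sum_measurable [measurable]: "dyadic_sum n \<in> borel_measurable M"
  unfolding dyadic_sum_eq by measurable

lemma dyadic_sum_minus_centre:
  assumes "\<omega> \<in> space M"
  shows "dyadic_sum n \<omega> - centre =
    (if Y \<omega> = 1 then dyadic_inner n contrast f else dyadic_inner n contrast g) - centre + noise n \<omega>"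
  using Y_binary assms by (auto simp: dyadic_sum_eq)

lemma prob_Y_eq_0: "prob {\<omega>\<in>space M. Y \<omega> = 0} = 1/2"
proof -
  have "{\<omega>\<in>space M. Y \<omega> = 0} = space M - {\<omega>\<in>space M. Y \<omega> = 1}"
    using Y_binary by auto
  then show ?thesis
    using prob_compl[of "{\<omega>\<in>space M. Y \<omega> = 1}"] Y_fair by simp
qed

lemma Y_indep_dyadic_increment_sum:
  assumes "B \<in> sets borel"
  shows "prob ({\<omega>\<in>space M. Y \<omega> = y} \<inter> {\<omega>\<in>space M. dyadic_increment_sum W d n \<omega> \<in> B}) =
         prob {\<omega>\<in>space M. Y \<omega> = y} * prob {\<omega>\<in>space M. dyadic_increment_sum W d n \<omega> \<in> B}"
proof -
  define G where "G = (\<Union>t\<in>{0..1}. {W t -` A \<inter> space M | A. A \<in> sets borel})"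
  define N where "N = sigma (space M) G"
  have "G \<subseteq> Pow (space M)"
    unfolding G_def by auto
  then have space_N: "space N = space M" and sets_N: "sets N = sigma_sets (space M) G"
    unfolding N_def by (simp_all add: space_measure_of_conv)
  have "W t \<in> borel_measurable N" if "t \<in> {0..1}" for t
  proof (rule measurableI)
    fix A :: "real set"
    assume "A \<in> sets borel"
    then have "W t -` A \<inter> space M \<in> G"
      unfolding G_def using that by (intro UN_I[of t]) blast+
    then show "W t -` A \<inter> space N \<in> sets N"
      unfolding space_N sets_N by (rule sigma_sets.Basic)
  qed simp
  from measurable_sets[OF dyadic_increment_sum_measurable[OF this] assms]
  have Z: "{\<omega>\<in>space M. dyadic_increment_sum W d n \<omega> \<in> B} \<in> sigma_sets (space M) G"
    unfolding space_N sets_N by (simp add: vimage_def Int_def conj_commute)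
  have "{y} \<in> sets borel"
    by simp
  then have "Y -` {y} \<inter> space M \<in> sigma_sets (space M) {Y -` A \<inter> space M | A. A \<in> sets borel}"
    by (intro sigma_sets.Basic) blast
  then have "{\<omega>\<in>space M. Y \<omega> = y} \<in> sigma_sets (space M) {Y -` A \<inter> space M | A. A \<in> sets borel}"
    by (simp add: vimage_def Int_def conj_commute)
  from indep_setD[OF Y_indep_W[folded G_def] this Z] show ?thesis .
qed

lemma noise_distributed:
  assumes "0 < dyadic_inner n contrast contrast"
  shows "distributed M lborel (noise n) (normal_density 0 (sqrt (dyadic_inner n contrast contrast)))"
proof -
  have variance: "(\<Sum>k<2^n. (2^n * dyadic_integral n contrast k)\<^sup>2 / 2^n) = dyadic_inner n contrast contrast"
  proof -
    have "(2^n * a)\<^sup>2 / 2^n = 2^n * (a * a)" for a :: real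
      by (simp add: power2_eq_square)
    then show ?thesis
      by (simp add: dyadic_inner_def sum_distrib_left)
  qed
  have "\<exists>k<2^n. 2^n * dyadic_integral n contrast k \<noteq> 0"
  proof (rule ccontr)
    assume "\<not> (\<exists>k<2^n. 2^n * dyadic_integral n contrast k \<noteq> 0)"
    then have "dyadic_inner n contrast contrast = 0"
      unfolding variance[symmetric] by simp
    then show False
      using assms by simp
  qed
  from dyadic_increment_sum_distributed[OF brownian this] show ?thesis
    unfolding variance .
qed

lemma dyadic_means_tendsto:
  shows "(\<lambda>n. dyadic_inner n contrast f) \<longlonglongrightarrow> centre + \<Delta>\<^sup>2 / 2"
    and "(\<lambda>n. dyadic_inner n contrast g) \<longlonglongrightarrow> centre - \<Delta>\<^sup>2 / 2"
    and "(\<lambda>n. dyadic_inner n contrast contrast) \<longlonglongrightarrow> \<Delta>\<^sup>2"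
proof -
  define ff fg gg where "ff = (LBINT s:{0..1}. f s * f s)" and "fg = (LBINT s:{0..1}. f s * g s)"
    and "gg = (LBINT s:{0..1}. g s * g s)"
  have "(LBINT s:{0..1}. g s * f s) = fg"
    unfolding fg_def by (simp only: mult.commute)
  then have cf: "(LBINT s:{0..1}. contrast s * f s) = ff - fg"
    and cg: "(LBINT s:{0..1}. contrast s * g s) = fg - gg"
    using set_integral_diff_mult(1)[OF L2_f L2_g L2_f] set_integral_diff_mult(1)[OF L2_f L2_g L2_g]
    unfolding ff_def fg_def gg_def by simp_all
  have cc: "\<Delta>\<^sup>2 = ff - fg - (fg - gg)"
    using set_integral_diff_mult(2)[OF L2_f L2_g L2_contrast] unfolding L2_norm_01_sq cf cg .
  have "centre = (ff - gg) / 2"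
    unfolding L2_norm_01_sq ff_def gg_def ..
  then have "ff - fg = centre + \<Delta>\<^sup>2 / 2" "fg - gg = centre - \<Delta>\<^sup>2 / 2"
    unfolding cc by (simp_all add: field_simps)
  then show "(\<lambda>n. dyadic_inner n contrast f) \<longlonglongrightarrow> centre + \<Delta>\<^sup>2 / 2"
    and "(\<lambda>n. dyadic_inner n contrast g) \<longlonglongrightarrow> centre - \<Delta>\<^sup>2 / 2"
    using dyadic_inner_tendsto[OF L2_contrast L2_f] dyadic_inner_tendsto[OF L2_contrast L2_g]
    unfolding cf cg by simp_all
  show "(\<lambda>n. dyadic_inner n contrast contrast) \<longlonglongrightarrow> \<Delta>\<^sup>2"
    using dyadic_inner_tendsto[OF L2_contrast L2_contrast] unfolding L2_norm_01_sq .
qed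

lemma prob_Y_noise_band_ge:
  fixes n :: nat and a b m R :: real
  defines "\<sigma> \<equiv> sqrt (dyadic_inner n contrast contrast)"
  assumes "y \<in> {0, 1}" and pos: "0 < dyadic_inner n contrast contrast" and "0 < a" "a \<le> b"
    and bound: "b + \<bar>m\<bar> \<le> \<sigma> * R"
  shows "(b - a) * exp (- R\<^sup>2 / 2) / (\<sigma> * sqrt (2 * pi)) \<le>
    prob ({\<omega>\<in>space M. Y \<omega> = y} \<inter> {\<omega>\<in>space M. a \<le> \<bar>m + noise n \<omega>\<bar> \<and> \<bar>m + noise n \<omega>\<bar> \<le> b})"
proof -
  have "{x. a \<le> \<bar>m + x\<bar> \<and> \<bar>m + x\<bar> \<le> b} \<in> sets borel"
    by measurable
  from Y_indep_dyadic_increment_sum[OF this]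
  have "prob ({\<omega>\<in>space M. Y \<omega> = y} \<inter> {\<omega>\<in>space M. a \<le> \<bar>m + noise n \<omega>\<bar> \<and> \<bar>m + noise n \<omega>\<bar> \<le> b})
      = prob {\<omega>\<in>space M. Y \<omega> = y} * prob {\<omega>\<in>space M. a \<le> \<bar>m + noise n \<omega>\<bar> \<and> \<bar>m + noise n \<omega>\<bar> \<le> b}"
    by simp
  also have "prob {\<omega>\<in>space M. Y \<omega> = y} = 1/2"
    using \<open>y \<in> {0, 1}\<close> Y_fair prob_Y_eq_0 by auto
  finally have "prob ({\<omega>\<in>space M. Y \<omega> = y} \<inter> {\<omega>\<in>space M. a \<le> \<bar>m + noise n \<omega>\<bar> \<and> \<bar>m + noise n \<omega>\<bar> \<le> b})
      = 1/2 * prob {\<omega>\<in>space M. a \<le> \<bar>m + noise n \<omega>\<bar> \<and> \<bar>m + noise n \<omega>\<bar> \<le> b}" .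
  moreover have "2 * (b - a) * exp (- R\<^sup>2 / 2) / (\<sigma> * sqrt (2 * pi))
      \<le> prob {\<omega>\<in>space M. a \<le> \<bar>m + noise n \<omega>\<bar> \<and> \<bar>m + noise n \<omega>\<bar> \<le> b}"
    using pos \<open>0 < a\<close> \<open>a \<le> b\<close> bound unfolding \<sigma>_def
    by (intro normal_abs_band_prob_ge noise_distributed) auto
  moreover have "2 * (b - a) * exp (- R\<^sup>2 / 2) / (\<sigma> * sqrt (2 * pi)) =
      (b - a) * exp (- R\<^sup>2 / 2) / (\<sigma> * sqrt (2 * pi)) + (b - a) * exp (- R\<^sup>2 / 2) / (\<sigma> * sqrt (2 * pi))"
    by (simp only: mult_2 distrib_right add_divide_distrib)
  ultimately show ?thesis
    by linarith
qed

lemma dyadic_sum_band_prob_ge_gaussian: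
  fixes n :: nat and a b R :: real
  defines "\<sigma> \<equiv> sqrt (dyadic_inner n contrast contrast)"
  assumes "0 < dyadic_inner n contrast contrast" "0 < a" "a \<le> b"
    and "b + \<bar>dyadic_inner n contrast f - centre\<bar> \<le> \<sigma> * R"
    and "b + \<bar>dyadic_inner n contrast g - centre\<bar> \<le> \<sigma> * R"
  shows "2 * (b - a) * exp (- R\<^sup>2 / 2) / (\<sigma> * sqrt (2 * pi))
           \<le> prob {\<omega>\<in>space M. a \<le> \<bar>dyadic_sum n \<omega> - centre\<bar> \<and> \<bar>dyadic_sum n \<omega> - centre\<bar> \<le> b}"
proof -
  define band where "band y m = {\<omega>\<in>space M. Y \<omega> = y} \<inter>
      {\<omega>\<in>space M. a \<le> \<bar>m + noise n \<omega>\<bar> \<and> \<bar>m + noise n \<omega>\<bar> \<le> b}" for y m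
  let ?m\<^sub>1 = "dyadic_inner n contrast f - centre" and ?m\<^sub>0 = "dyadic_inner n contrast g - centre"
  have "band 1 ?m\<^sub>1 \<union> band 0 ?m\<^sub>0 \<subseteq>
      {\<omega>\<in>space M. a \<le> \<bar>dyadic_sum n \<omega> - centre\<bar> \<and> \<bar>dyadic_sum n \<omega> - centre\<bar> \<le> b}"
    by (auto simp: band_def dyadic_sum_minus_centre)
  then have "prob (band 1 ?m\<^sub>1 \<union> band 0 ?m\<^sub>0) \<le>
      prob {\<omega>\<in>space M. a \<le> \<bar>dyadic_sum n \<omega> - centre\<bar> \<and> \<bar>dyadic_sum n \<omega> - centre\<bar> \<le> b}"
    by (intro finite_measure_mono) measurable
  moreover have "prob (band 1 ?m\<^sub>1 \<union> band 0 ?m\<^sub>0) = prob (band 1 ?m\<^sub>1) + prob (band 0 ?m\<^sub>0)"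
    by (intro finite_measure_Union) (auto simp: band_def)
  moreover have "(b - a) * exp (- R\<^sup>2 / 2) / (\<sigma> * sqrt (2 * pi)) \<le> prob (band 1 ?m\<^sub>1)"
    and "(b - a) * exp (- R\<^sup>2 / 2) / (\<sigma> * sqrt (2 * pi)) \<le> prob (band 0 ?m\<^sub>0)"
    unfolding band_def \<sigma>_def using assms by (intro prob_Y_noise_band_ge; simp)+
  moreover have "2 * (b - a) * exp (- R\<^sup>2 / 2) / (\<sigma> * sqrt (2 * pi)) =
      (b - a) * exp (- R\<^sup>2 / 2) / (\<sigma> * sqrt (2 * pi)) + (b - a) * exp (- R\<^sup>2 / 2) / (\<sigma> * sqrt (2 * pi))"
    by (simp only: mult_2 distrib_right add_divide_distrib)
  ultimately show ?thesis
    by linarith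
qed

lemma dyadic_scale_tendsto: "(\<lambda>n. sqrt (dyadic_inner n contrast contrast)) \<longlonglongrightarrow> \<Delta>"
proof -
  have "(\<lambda>n. sqrt (dyadic_inner n contrast contrast)) \<longlonglongrightarrow> sqrt (\<Delta>\<^sup>2)"
    by (intro tendsto_real_sqrt dyadic_means_tendsto)
  then show ?thesis
    using separated by simp
qed

lemma dyadic_scale_le: "sqrt (dyadic_inner n contrast contrast) \<le> \<Delta>"
proof -
  have "sqrt (dyadic_inner n contrast contrast) \<le> sqrt (\<Delta>\<^sup>2)"
    unfolding L2_norm_01_sq by (intro real_sqrt_le_mono dyadic_inner_self_le L2_contrast)
  then show ?thesis
    using separated by simp
qed

lemma dyadic_margins_tendsto:
  shows "(\<lambda>n. sqrt (dyadic_inner n contrast contrast) * (1 + \<Delta> / 2)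
            - \<bar>dyadic_inner n contrast f - centre\<bar>) \<longlonglongrightarrow> \<Delta>"
    and "(\<lambda>n. sqrt (dyadic_inner n contrast contrast) * (1 + \<Delta> / 2)
            - \<bar>dyadic_inner n contrast g - centre\<bar>) \<longlonglongrightarrow> \<Delta>"
proof -
  have "(\<lambda>n. sqrt (dyadic_inner n contrast contrast) * (1 + \<Delta> / 2)
            - \<bar>dyadic_inner n contrast f - centre\<bar>)
      \<longlonglongrightarrow> \<Delta> * (1 + \<Delta> / 2) - \<bar>centre + \<Delta>\<^sup>2 / 2 - centre\<bar>"
    and "(\<lambda>n. sqrt (dyadic_inner n contrast contrast) * (1 + \<Delta> / 2)
            - \<bar>dyadic_inner n contrast g - centre\<bar>)
      \<longlonglongrightarrow> \<Delta> * (1 + \<Delta> / 2) - \<bar>centre - \<Delta>\<^sup>2 / 2 - centre\<bar>"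
    by (intro tendsto_intros dyadic_scale_tendsto dyadic_means_tendsto)+
  moreover have "\<Delta> * (1 + \<Delta> / 2) - \<bar>centre + \<Delta>\<^sup>2 / 2 - centre\<bar> = \<Delta>"
    and "\<Delta> * (1 + \<Delta> / 2) - \<bar>centre - \<Delta>\<^sup>2 / 2 - centre\<bar> = \<Delta>"
    by (simp_all add: power2_eq_square algebra_simps)
  ultimately show "(\<lambda>n. sqrt (dyadic_inner n contrast contrast) * (1 + \<Delta> / 2)
            - \<bar>dyadic_inner n contrast f - centre\<bar>) \<longlonglongrightarrow> \<Delta>"
    and "(\<lambda>n. sqrt (dyadic_inner n contrast contrast) * (1 + \<Delta> / 2)
            - \<bar>dyadic_inner n contrast g - centre\<bar>) \<longlonglongrightarrow> \<Delta>"
    by simp_all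
qed

lemma dyadic_sum_band_prob_ge:
  fixes n :: nat and a b :: real
  defines "\<delta> \<equiv> exp (- (1 + \<Delta> / 2)\<^sup>2 / 2) / (2 * sqrt (2 * pi))"
  assumes pos: "0 < dyadic_inner n contrast contrast" and "0 < a" and ab: "a \<le> b"
    and close: "b + \<bar>dyadic_inner n contrast f - centre\<bar> \<le> sqrt (dyadic_inner n contrast contrast) * (1 + \<Delta> / 2)"
      "b + \<bar>dyadic_inner n contrast g - centre\<bar> \<le> sqrt (dyadic_inner n contrast contrast) * (1 + \<Delta> / 2)"
  shows "4 * (b - a) * \<delta> / \<Delta>
           \<le> prob {\<omega>\<in>space M. a \<le> \<bar>dyadic_sum n \<omega> - centre\<bar> \<and> \<bar>dyadic_sum n \<omega> - centre\<bar> \<le> b}"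
proof -
  define \<sigma> where "\<sigma> = sqrt (dyadic_inner n contrast contrast)"
  have "0 < \<sigma>"
    unfolding \<sigma>_def using pos by simp
  have "4 * (b - a) * \<delta> / \<Delta> \<le> 4 * (b - a) * \<delta> / \<sigma>"
    using \<open>0 < \<sigma>\<close> dyadic_scale_le[of n] separated ab unfolding \<sigma>_def \<delta>_def
    by (intro divide_left_mono mult_nonneg_nonneg) auto
  also have "\<dots> = 2 * (b - a) * exp (- (1 + \<Delta> / 2)\<^sup>2 / 2) / (\<sigma> * sqrt (2 * pi))"
    unfolding \<delta>_def using \<open>0 < \<sigma>\<close> by (simp add: field_simps)
  also have "\<dots> \<le> prob {\<omega>\<in>space M. a \<le> \<bar>dyadic_sum n \<omega> - centre\<bar> \<and> \<bar>dyadic_sum n \<omega> - centre\<bar> \<le> b}"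
    unfolding \<sigma>_def using pos \<open>0 < a\<close> ab close by (rule dyadic_sum_band_prob_ge_gaussian)
  finally show ?thesis .
qed

lemma exists_good_dyadic_level:
  assumes "\<beta> < \<Delta>" "0 < e" "0 < p"
  obtains n where "0 < dyadic_inner n contrast contrast"
    and "\<beta> + \<bar>dyadic_inner n contrast f - centre\<bar> < sqrt (dyadic_inner n contrast contrast) * (1 + \<Delta> / 2)"
    and "\<beta> + \<bar>dyadic_inner n contrast g - centre\<bar> < sqrt (dyadic_inner n contrast contrast) * (1 + \<Delta> / 2)"
    and "prob {\<omega>\<in>space M. \<bar>dyadic_sum n \<omega> - I \<omega>\<bar> > e} < p"
proof -
  have "(\<lambda>n. prob {\<omega>\<in>space M. \<bar>dyadic_sum n \<omega> - I \<omega>\<bar> > e}) \<longlonglongrightarrow> 0"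
    using stoch_integral \<open>0 < e\<close> unfolding is_stoch_integral_def by blast
  then have "eventually (\<lambda>n. prob {\<omega>\<in>space M. \<bar>dyadic_sum n \<omega> - I \<omega>\<bar> > e} < p) sequentially"
    using \<open>0 < p\<close> by (rule order_tendstoD(2))
  moreover have "eventually (\<lambda>n. 0 < sqrt (dyadic_inner n contrast contrast)) sequentially"
    using dyadic_scale_tendsto separated by (rule order_tendstoD(1))
  moreover note order_tendstoD(1)[OF dyadic_margins_tendsto(1) \<open>\<beta> < \<Delta>\<close>]
    order_tendstoD(1)[OF dyadic_margins_tendsto(2) \<open>\<beta> < \<Delta>\<close>]
  ultimately have "eventually (\<lambda>n. 0 < sqrt (dyadic_inner n contrast contrast) \<and>
      \<beta> < sqrt (dyadic_inner n contrast contrast) * (1 + \<Delta> / 2) - \<bar>dyadic_inner n contrast f - centre\<bar> \<and>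
      \<beta> < sqrt (dyadic_inner n contrast contrast) * (1 + \<Delta> / 2) - \<bar>dyadic_inner n contrast g - centre\<bar> \<and>
      prob {\<omega>\<in>space M. \<bar>dyadic_sum n \<omega> - I \<omega>\<bar> > e} < p) sequentially"
    by eventually_elim auto
  then obtain N where "\<forall>n\<ge>N. 0 < sqrt (dyadic_inner n contrast contrast) \<and>
      \<beta> < sqrt (dyadic_inner n contrast contrast) * (1 + \<Delta> / 2) - \<bar>dyadic_inner n contrast f - centre\<bar> \<and>
      \<beta> < sqrt (dyadic_inner n contrast contrast) * (1 + \<Delta> / 2) - \<bar>dyadic_inner n contrast g - centre\<bar> \<and>
      prob {\<omega>\<in>space M. \<bar>dyadic_sum n \<omega> - I \<omega>\<bar> > e} < p"
    unfolding eventually_sequentially by blast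
  then show ?thesis
    using that[of N] by auto
qed

lemma prob_dyadic_band_le:
  assumes "0 \<le> a" "b \<le> 1/4" "lo \<le> 6/25 * a" "b / 2 \<le> hi"
  shows "prob {\<omega>\<in>space M. a + e \<le> \<bar>dyadic_sum n \<omega> - centre\<bar> \<and> \<bar>dyadic_sum n \<omega> - centre\<bar> \<le> b - e}
    \<le> prob {\<omega>\<in>space M. lo \<le> \<bar>eta_reg f g (I \<omega>) - 1/2\<bar> \<and> \<bar>eta_reg f g (I \<omega>) - 1/2\<bar> \<le> hi}
      + prob {\<omega>\<in>space M. \<bar>dyadic_sum n \<omega> - I \<omega>\<bar> > e}"
proof -
  have "{\<omega>\<in>space M. a + e \<le> \<bar>dyadic_sum n \<omega> - centre\<bar> \<and> \<bar>dyadic_sum n \<omega> - centre\<bar> \<le> b - e}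
    \<subseteq> {\<omega>\<in>space M. lo \<le> \<bar>eta_reg f g (I \<omega>) - 1/2\<bar> \<and> \<bar>eta_reg f g (I \<omega>) - 1/2\<bar> \<le> hi}
      \<union> {\<omega>\<in>space M. \<bar>dyadic_sum n \<omega> - I \<omega>\<bar> > e}"
  proof (intro subsetI)
    fix \<omega>
    assume \<omega>: "\<omega> \<in> {\<omega>\<in>space M. a + e \<le> \<bar>dyadic_sum n \<omega> - centre\<bar> \<and> \<bar>dyadic_sum n \<omega> - centre\<bar> \<le> b - e}"
    show "\<omega> \<in> {\<omega>\<in>space M. lo \<le> \<bar>eta_reg f g (I \<omega>) - 1/2\<bar> \<and> \<bar>eta_reg f g (I \<omega>) - 1/2\<bar> \<le> hi}
      \<union> {\<omega>\<in>space M. \<bar>dyadic_sum n \<omega> - I \<omega>\<bar> > e}"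
    proof (cases "\<bar>dyadic_sum n \<omega> - I \<omega>\<bar> \<le> e")
      case True
      then show ?thesis
        using \<omega> logistic_band_of_approx[OF True _ _ assms(1,2), of centre] assms(3,4)
        by (auto simp: eta_reg_eq_logistic)
    qed (use \<omega> in auto)
  qed
  then show ?thesis
    unfolding eta_reg_eq_logistic logistic_def
    by (intro order_trans[OF finite_measure_mono measure_Un_le]) measurable
qed

theorem eta_band_prob_ge:
  assumes "0 < \<epsilon>" "\<epsilon> \<le> 1/4" "\<epsilon> \<le> \<Delta>"
  defines "\<delta> \<equiv> exp (- (1 + \<Delta> / 2)\<^sup>2 / 2) / (2 * sqrt (2 * pi))"
  shows "\<delta> * \<epsilon> / \<Delta> \<le>
    prob {\<omega>\<in>space M. \<delta> * \<epsilon> \<le> \<bar>eta_reg f g (I \<omega>) - 1/2\<bar> \<and> \<bar>eta_reg f g (I \<omega>) - 1/2\<bar> \<le> \<epsilon>}"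
    (is "_ \<le> prob ?E")
proof -
  txt \<open>\<open>S\<^sub>n - c\<close> is placed in \<open>[\<alpha> + e, \<beta> - e]\<close>: then \<open>6/25 \<alpha> = \<delta> \<epsilon>\<close> and \<open>\<beta>/2 \<le> \<epsilon>\<close> give the
    band for \<open>\<eta>\<close>, and \<open>4 (\<beta> - \<alpha> - 2 e) \<ge> 7/5 \<epsilon>\<close> leaves room for the error probability
    \<open>2/5 \<delta> \<epsilon> / \<Delta>\<close> of \<open>|S\<^sub>n - I| > e\<close>.\<close>
  define \<alpha> \<beta> e where "\<alpha> = 25/6 * \<delta> * \<epsilon>" and "\<beta> = 19/20 * \<epsilon>" and "e = \<epsilon> / 100"
  have "0 < \<delta>"
    unfolding \<delta>_def by simp
  moreover have "\<delta> \<le> 2/15"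
    unfolding \<delta>_def using separated by (intro gaussian_factor_le) simp
  ultimately have "0 \<le> \<alpha>" "\<alpha> \<le> 5/9 * \<epsilon>"
    unfolding \<alpha>_def using \<open>0 < \<epsilon>\<close> by (simp_all add: mult_le_cancel_right_pos)
  obtain n where level: "0 < dyadic_inner n contrast contrast"
    "\<beta> + \<bar>dyadic_inner n contrast f - centre\<bar> < sqrt (dyadic_inner n contrast contrast) * (1 + \<Delta> / 2)"
    "\<beta> + \<bar>dyadic_inner n contrast g - centre\<bar> < sqrt (dyadic_inner n contrast contrast) * (1 + \<Delta> / 2)"
    and bad: "prob {\<omega>\<in>space M. \<bar>dyadic_sum n \<omega> - I \<omega>\<bar> > e} < 2/5 * (\<delta> * \<epsilon> / \<Delta>)"
    using exists_good_dyadic_level[of \<beta> e "2/5 * (\<delta> * \<epsilon> / \<Delta>)"] assms(1,3) separated \<open>0 < \<delta>\<close>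
    unfolding \<beta>_def e_def by auto
  have "4 * ((\<beta> - e) - (\<alpha> + e)) * \<delta> / \<Delta> \<le>
      prob {\<omega>\<in>space M. \<alpha> + e \<le> \<bar>dyadic_sum n \<omega> - centre\<bar> \<and> \<bar>dyadic_sum n \<omega> - centre\<bar> \<le> \<beta> - e}"
    using level \<open>0 \<le> \<alpha>\<close> \<open>\<alpha> \<le> 5/9 * \<epsilon>\<close> \<open>0 < \<epsilon>\<close> unfolding \<delta>_def
    by (intro dyadic_sum_band_prob_ge) (auto simp: \<beta>_def e_def)
  also have "\<dots> \<le> prob ?E + prob {\<omega>\<in>space M. \<bar>dyadic_sum n \<omega> - I \<omega>\<bar> > e}"
    using \<open>0 \<le> \<alpha>\<close> assms(1,2) by (intro prob_dyadic_band_le) (auto simp: \<alpha>_def \<beta>_def)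
  finally have "4 * ((\<beta> - e) - (\<alpha> + e)) * \<delta> / \<Delta> \<le> prob ?E + 2/5 * (\<delta> * \<epsilon> / \<Delta>)"
    using bad by linarith
  moreover have "7/5 * \<epsilon> \<le> 4 * ((\<beta> - e) - (\<alpha> + e))"
    using \<open>\<alpha> \<le> 5/9 * \<epsilon>\<close> \<open>0 < \<epsilon>\<close> unfolding \<beta>_def e_def by (simp add: algebra_simps)
  from mult_right_mono[OF this, of "\<delta> / \<Delta>"]
  have "7/5 * (\<delta> * \<epsilon> / \<Delta>) \<le> 4 * ((\<beta> - e) - (\<alpha> + e)) * \<delta> / \<Delta>"
    using \<open>0 < \<delta>\<close> separated by (simp add: field_simps)
  ultimately show ?thesis
    by linarith
qed

end

theorem proposition5:
  fixes M :: "'a measure"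
    and Y :: "'a \<Rightarrow> real"
    and W :: "real \<Rightarrow> 'a \<Rightarrow> real"
    and f g :: "real \<Rightarrow> real"
    and I :: "'a \<Rightarrow> real"
    and \<epsilon> :: real
  assumes "prob_space M"
    and "L2_01 f" and "L2_01 g"
    and "L2_norm_01 (\<lambda>t. f t - g t) > 0"
    and "Y \<in> borel_measurable M"
    and "\<forall>\<omega>\<in>space M. Y \<omega> \<in> {0, 1}"
    and "measure M {\<omega>\<in>space M. Y \<omega> = 1} = 1/2"
    and "brownian_motion_01 M W"
    and "prob_space.indep_set M
           (sigma_sets (space M) {Y -` A \<inter> space M | A. A \<in> sets borel})
           (sigma_sets (space M)
              (\<Union>t\<in>{0..1}. {W t -` A \<inter> space M | A. A \<in> sets borel}))"
    and "is_stoch_integral M (model_X f g Y W) (\<lambda>t. f t - g t) I"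
    and "\<epsilon> \<le> min (1/4) (L2_norm_01 (\<lambda>t. f t - g t))"
  shows "let \<Delta> = L2_norm_01 (\<lambda>t. f t - g t);
             \<delta> = exp (- (1 + \<Delta> / 2)\<^sup>2 / 2) / (2 * sqrt (2 * pi))
         in measure M {\<omega>\<in>space M. \<delta> * \<epsilon> \<le> \<bar>eta_reg f g (I \<omega>) - 1/2\<bar> \<and>
                                 \<bar>eta_reg f g (I \<omega>) - 1/2\<bar> \<le> \<epsilon>}
            \<ge> \<delta> * \<epsilon> / \<Delta>"
proof -
  interpret binary_signal_model M Y W f g I
    by (intro binary_signal_model.intro binary_signal_model_axioms.intro assms)
  show ?thesis
  proof (cases "\<epsilon> \<le> 0")
    case True
    then have "exp (- (1 + \<Delta> / 2)\<^sup>2 / 2) / (2 * sqrt (2 * pi)) * \<epsilon> / \<Delta> \<le> 0"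
      using separated by (simp add: divide_nonpos_pos mult_nonneg_nonpos)
    then show ?thesis
      unfolding Let_def by (rule order_trans) simp
  next
    case False
    then show ?thesis
      using eta_band_prob_ge assms(11) by simp
  qed
qed

end
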